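(* Let $r>1$ and let $k,\ell,m$ be positive integers with $m\ge 12r$. Let $x_0\in R_1\cup\dots\cup R_\ell$ be a reservoir vertex of the $(k,\ell,m)$-superstar, and run the Moran process with fitness $r$ on the superstar with initial mutant $x_0$. Then the extinction probability is at least $1/(26r^2\ell)$.
   Context: Moran process: given a directed graph $G$ and fitness $r$, one vertex $x_0$ is a mutant, the rest non-mutants. At each step a vertex $v$ is chosen with probability proportional to fitness (mutants $r$, non-mutants $1$), an out-neighbour $w$ of $v$ is chosen uniformly at random and the state of $v$ is copied to $w$. Extinction: eventually no vertex is a mutant. The $(k,\ell,m)$-superstar has vertex set the disjoint union of reservoirs $R_1,\dots,R_\ell$ of size $m$, vertices $v_{i,j}$ ($i\in[\ell]$, $j\in[k]$), and a centre $v^*$; its edges are, for each $i\in[\ell]$: from $v^*$ to every vertex of $R_i$, from every vertex of $R_i$ to $v_{i,1}$, from $v_{i,j}$ to $v_{i,j+1}$ for $j\in[k-1]$, and from $v_{i,k}$ to $v^*$. *)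

theory Defs
  imports Complex_Main
begin

text \<open>A state of the Moran process is the set S of mutant vertices.\<close>

definition fitness :: "real \<Rightarrow> 'v set \<Rightarrow> 'v \<Rightarrow> real" where
  "fitness r S v = (if v \<in> S then r else 1)"

definition total_fitness :: "'v set \<Rightarrow> real \<Rightarrow> 'v set \<Rightarrow> real" where
  "total_fitness V r S = (\<Sum>v\<in>V. fitness r S v)"

definition moran_update :: "'v set \<Rightarrow> 'v \<Rightarrow> 'v \<Rightarrow> 'v set" where
  "moran_update S v w = (if v \<in> S then insert w S else S - {w})"

text \<open>One-step transition probability from mutant set S to mutant set S':
  v is chosen with probability proportional to fitness, then an out-neighbour w
  of v uniformly at random.\<close>
definition moran_trans :: "'v set \<Rightarrow> ('v \<Rightarrow> 'v set) \<Rightarrow> real \<Rightarrow> 'v set \<Rightarrow> 'v set \<Rightarrow> real" where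
  "moran_trans V out r S S' =
     (\<Sum>v\<in>V. \<Sum>w\<in>out v.
        (fitness r S v / total_fitness V r S) * (1 / real (card (out v))) *
        (if moran_update S v w = S' then 1 else 0))"

fun moran_dist :: "'v set \<Rightarrow> ('v \<Rightarrow> 'v set) \<Rightarrow> real \<Rightarrow> 'v \<Rightarrow> nat \<Rightarrow> 'v set \<Rightarrow> real" where
  "moran_dist V out r x0 0 S = (if S = {x0} then 1 else 0)"
| "moran_dist V out r x0 (Suc t) S' =
     (\<Sum>S\<in>Pow V. moran_dist V out r x0 t S * moran_trans V out r S S')"

text \<open>Extinction probability: probability that eventually no vertex is a mutant.
  Since the empty mutant set is absorbing, the events "extinct by time t" increase
  with t, so this is the supremum (= limit) of the probabilities of being extinct at time t.\<close>
definition extinction_prob :: "'v set \<Rightarrow> ('v \<Rightarrow> 'v set) \<Rightarrow> real \<Rightarrow> 'v \<Rightarrow> real" where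
  "extinction_prob V out r x0 = (SUP t. moran_dist V out r x0 t {})"

datatype ssv = Res nat nat   \<comment> \<open>Res i j: j-th vertex of reservoir R_i, i in [l], j in [m]\<close>
  | Path nat nat
  | Centre

definition reservoir :: "nat \<Rightarrow> nat \<Rightarrow> ssv set" where
  "reservoir m i = {Res i j | j. j \<in> {1..m}}"

definition superstar_verts :: "nat \<Rightarrow> nat \<Rightarrow> nat \<Rightarrow> ssv set" where
  "superstar_verts k l m =
     {Res i j | i j. i \<in> {1..l} \<and> j \<in> {1..m}} \<union>
     {Path i j | i j. i \<in> {1..l} \<and> j \<in> {1..k}} \<union> {Centre}"

fun superstar_out :: "nat \<Rightarrow> nat \<Rightarrow> nat \<Rightarrow> ssv \<Rightarrow> ssv set" where
  "superstar_out k l m Centre = (\<Union>i\<in>{1..l}. reservoir m i)"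
| "superstar_out k l m (Res i j) = {Path i 1}"
| "superstar_out k l m (Path i j) = (if j < k then {Path i (j + 1)} else {Centre})"

end

theory Submission
  imports Defs
begin

text \<open>
  Let the initial mutant be x = Res i j0 and write P = Path i 1. We only follow the mutant sets
  {x} and {x, P}: from {x} the centre copies a non-mutant onto x (extinction, probability
  A = 1/(W lm)), or x copies itself onto P (probability B = r/W); from {x, P} one of the other m - 1
  vertices of R_i overwrites P and we are back at {x} (probability G = (m - 1)/W'), and every
  other change (probability at most D = (r + 1/(lm))/W') is pessimistically discarded. Since all
  transition probabilities of this leaky three-state chain are lower bounds for those of the Moran
  process, the extinction probability is at least its absorption probability
  A(G + D)/(A(G + D) + BD), in which the total fitnesses W, W' cancel; this is at least
  1/(3 r^2 l) already for m \<ge> 1.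
\<close>

text \<open>
  Masses (absorbed, at state 0, at state 1) after t steps of the chain started in state 0 that
  moves from 0 to absorption with probability A and to 1 with probability B, and from 1 back to 0
  with probability G; the mass leaving state 1 with probability D is lost.
\<close>
fun leaky_chain :: "real \<Rightarrow> real \<Rightarrow> real \<Rightarrow> real \<Rightarrow> nat \<Rightarrow> real \<times> real \<times> real" where
  "leaky_chain A B G D 0 = (0, 1, 0)"
| "leaky_chain A B G D (Suc t) =
     (case leaky_chain A B G D t of (e, u, v) \<Rightarrow>
        (e + A * u, (1 - A - B) * u + G * v, B * u + (1 - G - D) * v))"

definition leaky_absorption :: "real \<Rightarrow> real \<Rightarrow> real \<Rightarrow> real \<Rightarrow> real" where
  "leaky_absorption A B G D = A * (G + D) / (A * (G + D) + B * D)"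

lemma leaky_absorption_scale:
  assumes "0 < c" "0 < c'"
  shows "leaky_absorption (c * A) (c * B) (c' * G) (c' * D) = leaky_absorption A B G D"
proof -
  have num: "c * A * (c' * G + c' * D) = (c * c') * (A * (G + D))"
    and den: "c * c' * (A * (G + D)) + c * B * (c' * D) = (c * c') * (A * (G + D) + B * D)"
    by (simp_all add: algebra_simps)
  show ?thesis
    unfolding leaky_absorption_def num den using assms by simp
qed

text \<open>
  p0 and p1 are the absorption probabilities from states 0 and 1, so e + p0 u + p1 v is
  conserved, while the mass u + v still in the system decays geometrically.
\<close>
lemma leaky_chain_invariant:
  assumes "0 < A" "0 \<le> B" "0 \<le> G" "0 < D" "A + B \<le> 1" "G + D \<le> 1"
    and "leaky_chain A B G D t = (e, u, v)"
  defines "Q \<equiv> A * (G + D) + B * D"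
  defines "p0 \<equiv> A * (G + D) / Q" and "p1 \<equiv> A * G / Q"
  shows "0 \<le> u \<and> 0 \<le> v \<and> u + v \<le> max (1 - A) (1 - D) ^ t \<and> e + p0 * u + p1 * v = p0"
  using assms(7)
proof (induction t arbitrary: e u v)
  case 0
  then show ?case by auto
next
  case (Suc t)
  obtain e0 u0 v0 where prev: "leaky_chain A B G D t = (e0, u0, v0)"
    by (metis prod.exhaust)
  have u0: "0 \<le> u0" and v0: "0 \<le> v0" and mass: "u0 + v0 \<le> max (1 - A) (1 - D) ^ t"
    and inv: "e0 + p0 * u0 + p1 * v0 = p0"
    using Suc.IH[OF prev] by auto
  have step: "e = e0 + A * u0" "u = (1 - A - B) * u0 + G * v0" "v = B * u0 + (1 - G - D) * v0"
    using Suc.prems prev by auto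
  have "Q > 0" unfolding Q_def using assms(1-4) by (simp add: add_pos_nonneg)
  then have "Q \<noteq> 0" by simp
  have "u + v = (1 - A) * u0 + (1 - D) * v0"
    unfolding step by (simp add: algebra_simps)
  also have "\<dots> \<le> max (1 - A) (1 - D) * (u0 + v0)"
    using u0 v0 by (simp add: distrib_left mult_right_mono add_mono)
  also have "\<dots> \<le> max (1 - A) (1 - D) ^ Suc t"
    using mass assms(2,5) by (simp add: mult_left_mono)
  finally have "u + v \<le> max (1 - A) (1 - D) ^ Suc t" .
  moreover have "e + p0 * u + p1 * v = p0"
  proof -
    have "A * Q + A * (G + D) * (1 - A - B) + A * G * B = A * (G + D)"
      unfolding Q_def by (simp add: algebra_simps)
    then have coeff_u: "A + p0 * (1 - A - B) + p1 * B = p0"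
      unfolding p0_def p1_def using \<open>Q \<noteq> 0\<close> by (simp add: field_simps)
    have coeff_v: "p0 * G + p1 * (1 - G - D) = p1"
      unfolding p0_def p1_def using \<open>Q \<noteq> 0\<close> by (simp add: field_simps)
    have "e + p0 * u + p1 * v
        = e0 + (A + p0 * (1 - A - B) + p1 * B) * u0 + (p0 * G + p1 * (1 - G - D)) * v0"
      unfolding step by (simp add: algebra_simps)
    then show ?thesis
      using inv coeff_u coeff_v by simp
  qed
  ultimately show ?case
    using u0 v0 assms(1-6) unfolding step by simp
qed

lemma leaky_chain_absorbed_ge:
  assumes "0 < A" "0 \<le> B" "0 \<le> G" "0 < D" "A + B \<le> 1" "G + D \<le> 1"
  shows "leaky_absorption A B G D - max (1 - A) (1 - D) ^ t \<le> fst (leaky_chain A B G D t)"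
proof -
  obtain e u v where chain: "leaky_chain A B G D t = (e, u, v)"
    by (metis prod.exhaust)
  define Q where "Q = A * (G + D) + B * D"
  have "Q > 0" unfolding Q_def using assms(1-4) by (simp add: add_pos_nonneg)
  have absorption_le_1: "A * (G + D) / Q \<le> 1" and "A * G / Q \<le> 1"
    using \<open>Q > 0\<close> assms(1-4) unfolding Q_def
    by (auto simp: distrib_left intro!: add_nonneg_nonneg mult_nonneg_nonneg)
  have "0 \<le> u" "0 \<le> v" "u + v \<le> max (1 - A) (1 - D) ^ t"
    and "e + A * (G + D) / Q * u + A * G / Q * v = A * (G + D) / Q"
    using leaky_chain_invariant[OF assms chain] unfolding Q_def by auto
  moreover have "A * (G + D) / Q * u \<le> u" and "A * G / Q * v \<le> v"
    using absorption_le_1 \<open>A * G / Q \<le> 1\<close> \<open>0 \<le> u\<close> \<open>0 \<le> v\<close> \<open>Q > 0\<close> assms(1-4)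
    by (intro mult_left_le_one_le; simp)+
  ultimately show ?thesis
    using chain unfolding leaky_absorption_def Q_def by simp
qed

lemma absorption_lower_bound:
  fixes e u v :: "nat \<Rightarrow> real"
  assumes coeffs: "0 < A" "0 \<le> B" "0 \<le> G" "0 < D" "A + B \<le> 1" "G + D \<le> 1"
    and init: "0 \<le> e 0" "1 \<le> u 0" "0 \<le> v 0"
    and step_e: "\<And>t. e t + A * u t \<le> e (Suc t)"
    and step_u: "\<And>t. (1 - A - B) * u t + G * v t \<le> u (Suc t)"
    and step_v: "\<And>t. B * u t + (1 - G - D) * v t \<le> v (Suc t)"
    and bounded: "bdd_above (range e)"
  shows "leaky_absorption A B G D \<le> (SUP t. e t)"
proof -
  have dominated: "e' \<le> e t \<and> u' \<le> u t \<and> v' \<le> v t"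
    if "leaky_chain A B G D t = (e', u', v')" for t e' u' v'
    using that
  proof (induction t arbitrary: e' u' v')
    case 0
    then show ?case using init by auto
  next
    case (Suc t)
    obtain e0 u0 v0 where prev: "leaky_chain A B G D t = (e0, u0, v0)"
      by (metis prod.exhaust)
    have "e0 \<le> e t" "u0 \<le> u t" "v0 \<le> v t"
      using Suc.IH[OF prev] by auto
    then have "e0 + A * u0 \<le> e t + A * u t"
      and "(1 - A - B) * u0 + G * v0 \<le> (1 - A - B) * u t + G * v t"
      and "B * u0 + (1 - G - D) * v0 \<le> B * u t + (1 - G - D) * v t"
      using coeffs by (auto intro!: add_mono mult_left_mono)
    then show ?case
      using Suc.prems prev step_e[of t] step_u[of t] step_v[of t] by auto
  qed
  have "(\<lambda>t. max (1 - A) (1 - D) ^ t) \<longlonglongrightarrow> 0"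
    using coeffs by (intro LIMSEQ_power_zero) auto
  then have "(\<lambda>t. leaky_absorption A B G D - max (1 - A) (1 - D) ^ t)
      \<longlonglongrightarrow> leaky_absorption A B G D"
    using tendsto_diff[OF tendsto_const] by fastforce
  moreover have "leaky_absorption A B G D - max (1 - A) (1 - D) ^ t \<le> (SUP t. e t)" for t
  proof -
    have "leaky_absorption A B G D - max (1 - A) (1 - D) ^ t \<le> e t"
      using leaky_chain_absorbed_ge[OF coeffs, of t] dominated[of t]
      by (metis order_trans prod.collapse)
    also have "\<dots> \<le> (SUP t. e t)"
      by (rule cSUP_upper[OF UNIV_I bounded])
    finally show ?thesis .
  qed
  ultimately show ?thesis
    by (intro LIMSEQ_le_const2) auto
qed

lemma moran_update_eq_iff: "moran_update S v w = S \<longleftrightarrow> (w \<in> S \<longleftrightarrow> v \<in> S)"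
  unfolding moran_update_def by auto

locale moran_graph =
  fixes V :: "'v set" and out :: "'v \<Rightarrow> 'v set" and r :: real
  assumes finite_V: "finite V" and V_nonempty: "V \<noteq> {}"
    and out_subset: "v \<in> V \<Longrightarrow> out v \<subseteq> V"
    and finite_out: "v \<in> V \<Longrightarrow> finite (out v)"
    and out_nonempty: "v \<in> V \<Longrightarrow> out v \<noteq> {}"
    and fitness_pos: "0 < r"
begin

lemma total_fitness_pos: "0 < total_fitness V r S"
  unfolding total_fitness_def fitness_def
  using finite_V V_nonempty fitness_pos by (intro sum_pos) auto

definition edge_prob :: "'v set \<Rightarrow> 'v \<Rightarrow> real" where
  "edge_prob S v = fitness r S v / total_fitness V r S / real (card (out v))"

lemma edge_prob_nonneg: "0 \<le> edge_prob S v"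
  unfolding edge_prob_def fitness_def using total_fitness_pos[of S] fitness_pos by simp

lemma edge_prob_pos: "v \<in> V \<Longrightarrow> 0 < edge_prob S v"
  unfolding edge_prob_def fitness_def
  using total_fitness_pos[of S] fitness_pos finite_out out_nonempty by (simp add: card_gt_0_iff)

lemma sum_edge_prob: "(\<Sum>v\<in>V. edge_prob S v * card (out v)) = 1"
proof -
  have "(\<Sum>v\<in>V. edge_prob S v * card (out v)) = (\<Sum>v\<in>V. fitness r S v) / total_fitness V r S"
    unfolding sum_divide_distrib
    by (intro sum.cong) (auto simp: edge_prob_def finite_out out_nonempty)
  also have "\<dots> = 1"
    using total_fitness_pos[of S] unfolding total_fitness_def by simp
  finally show ?thesis .
qed

lemma moran_trans_eq:
  "moran_trans V out r S S' = (\<Sum>v\<in>V. edge_prob S v * card {w \<in> out v. moran_update S v w = S'})"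
  unfolding moran_trans_def edge_prob_def
  by (intro sum.cong refl)
    (simp only: sum_distrib_left[symmetric], simp add: finite_out sum.inter_filter[symmetric])

lemma moran_trans_nonneg: "0 \<le> moran_trans V out r S S'"
  unfolding moran_trans_eq by (intro sum_nonneg mult_nonneg_nonneg edge_prob_nonneg) simp

lemma sum_moran_trans:
  assumes "S \<subseteq> V"
  shows "(\<Sum>S'\<in>Pow V. moran_trans V out r S S') = 1"
proof -
  have fibres: "(\<Sum>S'\<in>Pow V. real (card {w \<in> out v. moran_update S v w = S'})) = card (out v)"
    if "v \<in> V" for v
  proof -
    have "moran_update S v ` out v \<subseteq> Pow V"
      using assms out_subset[OF that] by (auto simp: moran_update_def)
    then have "(\<Sum>S'\<in>Pow V. card {w \<in> out v. moran_update S v w = S'}) = card (out v)"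
      using sum.group[of "out v" "Pow V" "moran_update S v" "\<lambda>_. 1::nat"] finite_V finite_out[OF that]
      by simp
    then show ?thesis by (simp flip: of_nat_sum)
  qed
  have "(\<Sum>S'\<in>Pow V. moran_trans V out r S S')
      = (\<Sum>v\<in>V. edge_prob S v * (\<Sum>S'\<in>Pow V. real (card {w \<in> out v. moran_update S v w = S'})))"
    unfolding moran_trans_eq sum_distrib_left by (rule sum.swap)
  also have "\<dots> = (\<Sum>v\<in>V. edge_prob S v * card (out v))"
    by (intro sum.cong) (simp_all add: fibres)
  finally show ?thesis by (simp add: sum_edge_prob)
qed

lemma moran_trans_ge_sum:
  assumes "A \<subseteq> V" and "\<And>v. v \<in> A \<Longrightarrow> \<exists>w\<in>out v. moran_update S v w = S'"
  shows "(\<Sum>v\<in>A. edge_prob S v) \<le> moran_trans V out r S S'"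
proof -
  have "(\<Sum>v\<in>A. edge_prob S v) \<le> (\<Sum>v\<in>A. edge_prob S v * card {w \<in> out v. moran_update S v w = S'})"
  proof (rule sum_mono)
    fix v assume "v \<in> A"
    then have "{w \<in> out v. moran_update S v w = S'} \<noteq> {}" "finite {w \<in> out v. moran_update S v w = S'}"
      using assms finite_out by auto
    then have "0 < card {w \<in> out v. moran_update S v w = S'}"
      by (simp add: card_gt_0_iff)
    then have "edge_prob S v * 1 \<le> edge_prob S v * card {w \<in> out v. moran_update S v w = S'}"
      by (intro mult_left_mono edge_prob_nonneg) simp
    then show "edge_prob S v \<le> edge_prob S v * card {w \<in> out v. moran_update S v w = S'}"
      by simp
  qed
  also have "\<dots> \<le> (\<Sum>v\<in>V. edge_prob S v * card {w \<in> out v. moran_update S v w = S'})"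
    using assms(1) finite_V edge_prob_nonneg by (intro sum_mono2) auto
  finally show ?thesis unfolding moran_trans_eq .
qed

lemma moran_trans_ge_edge_prob:
  assumes "v \<in> V" "w \<in> out v" "moran_update S v w = S'"
  shows "edge_prob S v \<le> moran_trans V out r S S'"
  using moran_trans_ge_sum[of "{v}" S S'] assms by auto

lemma moran_trans_stay:
  assumes "C \<subseteq> V" and "\<And>v w. v \<in> V - C \<Longrightarrow> w \<in> out v \<Longrightarrow> (w \<in> S \<longleftrightarrow> v \<in> S)"
  shows "moran_trans V out r S S = 1 - (\<Sum>v\<in>C. edge_prob S v * card {w \<in> out v. (w \<in> S) \<noteq> (v \<in> S)})"
proof -
  let ?disagree = "\<lambda>v. {w \<in> out v. (w \<in> S) \<noteq> (v \<in> S)}"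
  have agree: "real (card {w \<in> out v. moran_update S v w = S}) = real (card (out v)) - real (card (?disagree v))"
    if "v \<in> V" for v
  proof -
    have "{w \<in> out v. moran_update S v w = S} = out v - ?disagree v"
      by (auto simp: moran_update_eq_iff)
    then show ?thesis
      using finite_out[OF that] by (simp add: card_Diff_subset card_mono of_nat_diff)
  qed
  have "moran_trans V out r S S
      = (\<Sum>v\<in>V. edge_prob S v * card (out v)) - (\<Sum>v\<in>V. edge_prob S v * card (?disagree v))"
    unfolding moran_trans_eq sum_subtractf[symmetric]
    by (intro sum.cong) (simp_all add: agree right_diff_distrib)
  also have "(\<Sum>v\<in>V. edge_prob S v * card (?disagree v)) = (\<Sum>v\<in>C. edge_prob S v * card (?disagree v))"
  proof (rule sum.mono_neutral_right[OF finite_V assms(1)], intro ballI)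
    fix v assume "v \<in> V - C"
    then have "?disagree v = {}" using assms(2) by blast
    then show "edge_prob S v * card (?disagree v) = 0" by (metis card.empty mult_zero_right of_nat_0)
  qed
  finally show ?thesis by (simp add: sum_edge_prob)
qed

lemma moran_trans_empty: "moran_trans V out r {} {} = 1"
  using moran_trans_stay[of "{}" "{}"] by simp

lemma moran_dist_nonneg: "0 \<le> moran_dist V out r x0 t S"
  by (induction t arbitrary: S) (auto intro!: sum_nonneg mult_nonneg_nonneg moran_trans_nonneg)

lemma sum_moran_dist:
  assumes "x0 \<in> V"
  shows "(\<Sum>S\<in>Pow V. moran_dist V out r x0 t S) = 1"
proof (induction t)
  case 0
  then show ?case using assms finite_V by (simp add: sum.delta)
next
  case (Suc t)
  have "(\<Sum>S'\<in>Pow V. moran_dist V out r x0 (Suc t) S')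
      = (\<Sum>S\<in>Pow V. moran_dist V out r x0 t S * (\<Sum>S'\<in>Pow V. moran_trans V out r S S'))"
    by (simp only: moran_dist.simps sum_distrib_left) (rule sum.swap)
  also have "\<dots> = (\<Sum>S\<in>Pow V. moran_dist V out r x0 t S)"
    by (intro sum.cong) (simp_all add: sum_moran_trans)
  finally show ?case using Suc by simp
qed

lemma moran_dist_le_1:
  assumes "x0 \<in> V" and "S \<subseteq> V"
  shows "moran_dist V out r x0 t S \<le> 1"
proof -
  have "moran_dist V out r x0 t S \<le> (\<Sum>S\<in>Pow V. moran_dist V out r x0 t S)"
    using assms finite_V moran_dist_nonneg by (intro member_le_sum) auto
  then show ?thesis using sum_moran_dist[OF assms(1)] by simp
qed

lemma moran_dist_Suc_ge:
  assumes "S1 \<subseteq> V" "S2 \<subseteq> V" "S1 \<noteq> S2"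
  shows "moran_dist V out r x0 t S1 * moran_trans V out r S1 S'
           + moran_dist V out r x0 t S2 * moran_trans V out r S2 S'
         \<le> moran_dist V out r x0 (Suc t) S'"
proof -
  have "moran_dist V out r x0 t S1 * moran_trans V out r S1 S'
          + moran_dist V out r x0 t S2 * moran_trans V out r S2 S'
      = (\<Sum>S\<in>{S1, S2}. moran_dist V out r x0 t S * moran_trans V out r S S')"
    using assms(3) by simp
  also have "\<dots> \<le> (\<Sum>S\<in>Pow V. moran_dist V out r x0 t S * moran_trans V out r S S')"
    using assms finite_V
    by (intro sum_mono2) (auto intro!: mult_nonneg_nonneg moran_dist_nonneg moran_trans_nonneg)
  finally show ?thesis by simp
qed

lemma extinction_prob_ge_leaky_chain:
  assumes "x \<in> V" "S \<subseteq> V" "S \<noteq> {x}" "S \<noteq> {}"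
    and coeffs: "0 < A" "0 \<le> B" "0 \<le> G" "0 < D" "A + B \<le> 1" "G + D \<le> 1"
    and kill: "A \<le> moran_trans V out r {x} {}"
    and spread: "B \<le> moran_trans V out r {x} S"
    and stay_single: "1 - A - B \<le> moran_trans V out r {x} {x}"
    and recover: "G \<le> moran_trans V out r S {x}"
    and stay_pair: "1 - G - D \<le> moran_trans V out r S S"
  shows "leaky_absorption A B G D \<le> extinction_prob V out r x"
proof -
  let ?d = "moran_dist V out r x"
  have nonneg: "0 \<le> ?d t S'" for t S' by (rule moran_dist_nonneg)
  have "{x} \<subseteq> V" using assms(1) by simp
  show ?thesis
    unfolding extinction_prob_def
  proof (rule absorption_lower_bound[where u = "\<lambda>t. ?d t {x}" and v = "\<lambda>t. ?d t S", OF coeffs])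
    show "0 \<le> ?d 0 {}" "1 \<le> ?d 0 {x}" "0 \<le> ?d 0 S"
      using assms(3) by simp_all
    show "?d t {} + A * ?d t {x} \<le> ?d (Suc t) {}" for t
    proof -
      have "?d t {} + A * ?d t {x} \<le> ?d t {} * moran_trans V out r {} {} + ?d t {x} * moran_trans V out r {x} {}"
        using mult_left_mono[OF kill nonneg] by (simp add: moran_trans_empty mult.commute[of A])
      also have "\<dots> \<le> ?d (Suc t) {}"
        using \<open>{x} \<subseteq> V\<close> by (intro moran_dist_Suc_ge) auto
      finally show ?thesis .
    qed
    show "(1 - A - B) * ?d t {x} + G * ?d t S \<le> ?d (Suc t) {x}" for t
    proof -
      have "(1 - A - B) * ?d t {x} + G * ?d t S
          \<le> ?d t {x} * moran_trans V out r {x} {x} + ?d t S * moran_trans V out r S {x}"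
        using mult_left_mono[OF stay_single nonneg] mult_left_mono[OF recover nonneg]
        by (simp add: mult.commute[of "1 - A - B"] mult.commute[of G] add_mono)
      also have "\<dots> \<le> ?d (Suc t) {x}"
        using \<open>{x} \<subseteq> V\<close> assms(2,3) by (intro moran_dist_Suc_ge) auto
      finally show ?thesis .
    qed
    show "B * ?d t {x} + (1 - G - D) * ?d t S \<le> ?d (Suc t) S" for t
    proof -
      have "B * ?d t {x} + (1 - G - D) * ?d t S
          \<le> ?d t {x} * moran_trans V out r {x} S + ?d t S * moran_trans V out r S S"
        using mult_left_mono[OF spread nonneg] mult_left_mono[OF stay_pair nonneg]
        by (simp add: mult.commute[of B] mult.commute[of "1 - G - D"] add_mono)
      also have "\<dots> \<le> ?d (Suc t) S"
        using \<open>{x} \<subseteq> V\<close> assms(2,3) by (intro moran_dist_Suc_ge) auto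
      finally show ?thesis .
    qed
    show "bdd_above (range (\<lambda>t. ?d t {}))"
      using moran_dist_le_1[OF assms(1)] by (intro bdd_aboveI2[where M = 1]) auto
  qed
qed

end

lemma leaky_absorption_superstar_ge:
  fixes r l m :: real
  assumes "1 \<le> r" "1 \<le> l" "1 \<le> m"
  shows "1 / (3 * r\<^sup>2 * l) \<le> leaky_absorption (1 / (l * m)) r (m - 1) (r + 1 / (l * m))"
proof -
  define a where "a = 1 / (l * m)"
  define X where "X = m - 1 + r + a"
  define Y where "Y = X + r * (r * l * m + 1)"
  have "0 < a" "a * (l * m) = 1"
    using assms unfolding a_def by simp_all
  have "m \<le> X" "0 < X"
    using assms \<open>0 < a\<close> unfolding X_def by simp_all
  have "1 \<le> r\<^sup>2"
    using assms(1) by (simp add: one_le_power)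
  then have "1 \<le> r\<^sup>2 * l"
    using mult_mono[of 1 "r\<^sup>2" 1 l] assms(2) by simp
  have "leaky_absorption a r (m - 1) (r + a) = a * X / (a * Y)"
    unfolding leaky_absorption_def X_def Y_def
    using \<open>a * (l * m) = 1\<close> by (simp add: algebra_simps power2_eq_square)
  also have "\<dots> = X / Y"
    using \<open>0 < a\<close> by simp
  finally have absorption: "leaky_absorption a r (m - 1) (r + a) = X / Y" .
  have "r\<^sup>2 * l * m \<le> r\<^sup>2 * l * X"
    using \<open>m \<le> X\<close> \<open>1 \<le> r\<^sup>2 * l\<close> by (intro mult_left_mono) simp_all
  moreover have "r \<le> r\<^sup>2 * l * X"
  proof -
    have "r \<le> r\<^sup>2" using assms(1) by (simp add: power2_eq_square)
    also have "\<dots> \<le> r\<^sup>2 * (l * X)"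
      using mult_mono[of 1 l 1 X] assms(2,3) \<open>m \<le> X\<close> by (intro mult_le_cancel_left1[THEN iffD2]) simp
    finally show ?thesis by (simp add: mult.assoc)
  qed
  moreover have "X \<le> r\<^sup>2 * l * X"
    using \<open>1 \<le> r\<^sup>2 * l\<close> \<open>0 < X\<close> by simp
  ultimately have "Y \<le> 3 * r\<^sup>2 * l * X"
    unfolding Y_def by (simp add: algebra_simps power2_eq_square)
  moreover have "0 < Y"
  proof -
    have "0 \<le> r * (r * l * m + 1)"
      using assms by (intro mult_nonneg_nonneg add_nonneg_nonneg) auto
    then show ?thesis unfolding Y_def using \<open>0 < X\<close> by simp
  qed
  ultimately have "X / (3 * r\<^sup>2 * l * X) \<le> X / Y"
    using \<open>0 < X\<close> by (intro divide_left_mono) (use assms in \<open>auto intro!: mult_pos_pos\<close>)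
  then show ?thesis
    using absorption \<open>0 < X\<close> unfolding a_def by simp
qed

lemma moran_graph_superstar:
  assumes "1 \<le> k" "1 \<le> l" "1 \<le> m" "0 < r"
  shows "moran_graph (superstar_verts k l m) (superstar_out k l m) r"
proof
  show "finite (superstar_verts k l m)"
    unfolding superstar_verts_def by (intro finite_UnI finite_image_set2) simp_all
  show "superstar_verts k l m \<noteq> {}"
    unfolding superstar_verts_def by simp
  fix v assume v: "v \<in> superstar_verts k l m"
  show "superstar_out k l m v \<subseteq> superstar_verts k l m"
    using v assms by (cases v) (auto simp: superstar_verts_def reservoir_def)
  show "finite (superstar_out k l m v)"
    by (cases v) (auto simp: reservoir_def intro!: finite_image_set)
  show "superstar_out k l m v \<noteq> {}"
    using assms by (cases v) (auto simp: reservoir_def)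
qed (use assms in simp)

lemma card_superstar_out_Centre: "card (superstar_out k l m Centre) = l * m"
proof -
  have "superstar_out k l m Centre = case_prod Res ` ({1..l} \<times> {1..m})"
    by (auto simp: reservoir_def)
  then show ?thesis
    by (simp add: card_image inj_on_def)
qed

locale superstar =
  fixes k l m :: nat and r :: real
  assumes k_pos: "1 \<le> k" and l_pos: "1 \<le> l" and m_pos: "1 \<le> m" and r_pos: "0 < r"

sublocale superstar \<subseteq> moran_graph "superstar_verts k l m" "superstar_out k l m" r
  using moran_graph_superstar k_pos l_pos m_pos r_pos .

context superstar
begin

context
  fixes i j0 :: nat
  assumes i: "i \<in> {1..l}" and j0: "j0 \<in> {1..m}"
begin

lemma superstar_start_mem:
  "Res i j0 \<in> superstar_verts k l m" "Path i 1 \<in> superstar_verts k l m"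
  "Centre \<in> superstar_verts k l m" "Res i j0 \<in> superstar_out k l m Centre"
  using i j0 k_pos by (auto simp: superstar_verts_def reservoir_def)

lemma superstar_trans_kill:
  "edge_prob {Res i j0} Centre \<le> moran_trans (superstar_verts k l m) (superstar_out k l m) r {Res i j0} {}"
  by (rule moran_trans_ge_edge_prob[OF _ superstar_start_mem(4)])
    (simp_all add: superstar_start_mem moran_update_def)

lemma superstar_trans_spread:
  "edge_prob {Res i j0} (Res i j0)
     \<le> moran_trans (superstar_verts k l m) (superstar_out k l m) r {Res i j0} {Res i j0, Path i 1}"
  by (rule moran_trans_ge_edge_prob[of _ "Path i 1"])
    (auto simp: superstar_start_mem moran_update_def)

lemma superstar_trans_stay_single:
  "moran_trans (superstar_verts k l m) (superstar_out k l m) r {Res i j0} {Res i j0}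
     = 1 - (edge_prob {Res i j0} Centre + edge_prob {Res i j0} (Res i j0))"
proof -
  let ?S = "{Res i j0}"
  have "(w \<in> ?S) = (v \<in> ?S)"
    if "v \<in> superstar_verts k l m - {Res i j0, Centre}" "w \<in> superstar_out k l m v" for v w
    using that by (cases v) (auto split: if_splits)
  then have "moran_trans (superstar_verts k l m) (superstar_out k l m) r ?S ?S
      = 1 - (\<Sum>v\<in>{Res i j0, Centre}. edge_prob ?S v * card {w \<in> superstar_out k l m v. (w \<in> ?S) \<noteq> (v \<in> ?S)})"
    using superstar_start_mem by (intro moran_trans_stay) auto
  moreover have "{w \<in> superstar_out k l m Centre. (w \<in> ?S) \<noteq> (Centre \<in> ?S)} = {Res i j0}"
    using superstar_start_mem by auto
  moreover have "{w \<in> superstar_out k l m (Res i j0). (w \<in> ?S) \<noteq> (Res i j0 \<in> ?S)} = {Path i 1}"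
    by auto
  ultimately show ?thesis by simp
qed

lemma superstar_trans_recover:
  "(\<Sum>v\<in>Res i ` ({1..m} - {j0}). edge_prob {Res i j0, Path i 1} v)
     \<le> moran_trans (superstar_verts k l m) (superstar_out k l m) r {Res i j0, Path i 1} {Res i j0}"
  using i by (intro moran_trans_ge_sum) (auto simp: superstar_verts_def moran_update_def)

lemma superstar_trans_stay_pair:
  "moran_trans (superstar_verts k l m) (superstar_out k l m) r {Res i j0, Path i 1} {Res i j0, Path i 1}
     = 1 - ((\<Sum>v\<in>Res i ` ({1..m} - {j0}). edge_prob {Res i j0, Path i 1} v)
            + (edge_prob {Res i j0, Path i 1} Centre + edge_prob {Res i j0, Path i 1} (Path i 1)))"
proof -
  let ?S = "{Res i j0, Path i 1}" and ?R = "Res i ` ({1..m} - {j0})"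
  let ?C = "insert Centre (insert (Path i 1) ?R)"
  have "?C \<subseteq> superstar_verts k l m"
    using i k_pos by (auto simp: superstar_verts_def)
  moreover have "(w \<in> ?S) = (v \<in> ?S)"
    if "v \<in> superstar_verts k l m - ?C" "w \<in> superstar_out k l m v" for v w
    using that by (cases v) (auto simp: superstar_verts_def split: if_splits)
  ultimately have "moran_trans (superstar_verts k l m) (superstar_out k l m) r ?S ?S
      = 1 - (\<Sum>v\<in>?C. edge_prob ?S v * card {w \<in> superstar_out k l m v. (w \<in> ?S) \<noteq> (v \<in> ?S)})"
    by (rule moran_trans_stay)
  also have "(\<Sum>v\<in>?C. edge_prob ?S v * card {w \<in> superstar_out k l m v. (w \<in> ?S) \<noteq> (v \<in> ?S)})
      = (\<Sum>v\<in>?C. edge_prob ?S v)"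
  proof (intro sum.cong refl)
    fix v assume "v \<in> ?C"
    then consider "v = Centre" | "v = Path i 1" | j where "v = Res i j" "j \<noteq> j0"
      by auto
    then have "card {w \<in> superstar_out k l m v. (w \<in> ?S) \<noteq> (v \<in> ?S)} = 1"
    proof cases
      case 1
      then have "{w \<in> superstar_out k l m v. (w \<in> ?S) \<noteq> (v \<in> ?S)} = {Res i j0}"
        using superstar_start_mem(4) by (auto simp: reservoir_def)
      then show ?thesis by simp
    next
      case 2
      then have "{w \<in> superstar_out k l m v. (w \<in> ?S) \<noteq> (v \<in> ?S)} = superstar_out k l m (Path i 1)"
        by auto
      then show ?thesis by simp
    next
      case 3
      then have "{w \<in> superstar_out k l m v. (w \<in> ?S) \<noteq> (v \<in> ?S)} = {Path i 1}"
        by auto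
      then show ?thesis by simp
    qed
    then show "edge_prob ?S v * card {w \<in> superstar_out k l m v. (w \<in> ?S) \<noteq> (v \<in> ?S)} = edge_prob ?S v"
      by simp
  qed
  also have "\<dots> = (\<Sum>v\<in>?R. edge_prob ?S v) + (edge_prob ?S Centre + edge_prob ?S (Path i 1))"
    by (simp add: image_iff)
  finally show ?thesis .
qed

lemma superstar_extinction_prob_ge:
  "leaky_absorption (1 / (real l * real m)) r (real m - 1) (r + 1 / (real l * real m))
     \<le> extinction_prob (superstar_verts k l m) (superstar_out k l m) r (Res i j0)"
proof -
  let ?S0 = "{Res i j0}" and ?S1 = "{Res i j0, Path i 1}" and ?R = "Res i ` ({1..m} - {j0})"
  let ?W0 = "total_fitness (superstar_verts k l m) r ?S0"
    and ?W1 = "total_fitness (superstar_verts k l m) r ?S1"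
  define A where "A = edge_prob ?S0 Centre"
  define B where "B = edge_prob ?S0 (Res i j0)"
  define G where "G = (\<Sum>v\<in>?R. edge_prob ?S1 v)"
  define D where "D = edge_prob ?S1 Centre + edge_prob ?S1 (Path i 1)"
  have coeffs: "0 < A" "0 \<le> B" "0 \<le> G" "0 < D" "A + B \<le> 1" "G + D \<le> 1"
    using edge_prob_pos[OF superstar_start_mem(3)] edge_prob_nonneg
      moran_trans_nonneg[of ?S0 ?S0] moran_trans_nonneg[of ?S1 ?S1]
      superstar_trans_stay_single superstar_trans_stay_pair
    unfolding A_def B_def G_def D_def by (auto intro: sum_nonneg add_pos_nonneg)
  have "leaky_absorption A B G D
      \<le> extinction_prob (superstar_verts k l m) (superstar_out k l m) r (Res i j0)"
    using superstar_start_mem superstar_trans_kill superstar_trans_spread superstar_trans_recover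
      superstar_trans_stay_single superstar_trans_stay_pair
    unfolding A_def B_def G_def D_def
    by (intro extinction_prob_ge_leaky_chain coeffs[unfolded A_def B_def G_def D_def]) auto
  moreover have "leaky_absorption A B G D
      = leaky_absorption (1 / (real l * real m)) r (real m - 1) (r + 1 / (real l * real m))"
  proof -
    have "A = 1 / ?W0 * (1 / (real l * real m))" "B = 1 / ?W0 * r"
      "D = 1 / ?W1 * (r + 1 / (real l * real m))"
      unfolding A_def B_def D_def edge_prob_def fitness_def card_superstar_out_Centre
      by (simp_all add: add_divide_distrib)
    moreover have "G = 1 / ?W1 * (real m - 1)"
    proof -
      have "G = (\<Sum>v\<in>?R. 1 / ?W1)"
        unfolding G_def by (intro sum.cong) (auto simp: edge_prob_def fitness_def)
      also have "\<dots> = 1 / ?W1 * (real m - 1)"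
        using j0 by (simp add: card_image inj_on_def of_nat_diff)
      finally show ?thesis .
    qed
    ultimately show ?thesis
      by (simp only:) (rule leaky_absorption_scale; simp add: total_fitness_pos)
  qed
  ultimately show ?thesis by simp
qed

end

end

theorem lemma4p3:
  fixes r :: real and k l m :: nat and x0 :: ssv
  assumes "r > 1" and "k \<ge> 1" and "l \<ge> 1" and "m \<ge> 1"
    and "real m \<ge> 12 * r"
    and "x0 \<in> (\<Union>i\<in>{1..l}. reservoir m i)"
  shows "extinction_prob (superstar_verts k l m) (superstar_out k l m) r x0
           \<ge> 1 / (26 * r\<^sup>2 * real l)"
proof -
  obtain i j0 where x0: "x0 = Res i j0" and "i \<in> {1..l}" "j0 \<in> {1..m}"
    using assms(6) by (auto simp: reservoir_def)
  interpret superstar k l m r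
    using assms(1-4) by unfold_locales simp_all
  have "1 / (26 * r\<^sup>2 * real l) \<le> 1 / (3 * r\<^sup>2 * real l)"
    using assms(1,3) by (intro divide_left_mono) auto
  also have "\<dots> \<le> leaky_absorption (1 / (real l * real m)) r (real m - 1) (r + 1 / (real l * real m))"
    using assms(1,3,4) by (intro leaky_absorption_superstar_ge) simp_all
  also have "\<dots> \<le> extinction_prob (superstar_verts k l m) (superstar_out k l m) r x0"
    unfolding x0 by (rule superstar_extinction_prob_ge) fact+
  finally show ?thesis .
qed

end
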